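(* Let $X$ be a nonnegative random variable with density $\pi(x)$ on $[0,\infty)$, and let $\delta>0$. Define the density $\pi'(x)=C(\delta x+1)^{-1/2}\pi(x)$ on $[0,\infty)$, where $C>0$ is the normalizing constant. If $\pi$ is heavy-tailed, then $\pi'$ is also heavy-tailed.
   Context: A density $f$ on $[0,\infty)$ is heavy-tailed if $\int_0^{\infty}f(x)e^{tx}\,dx=\infty$ for all $t>0$. *)

theory Defs
  imports "HOL-Analysis.Analysis"
begin

definition density_on_nonneg :: "(real \<Rightarrow> real) \<Rightarrow> bool" where
  "density_on_nonneg f \<longleftrightarrow>
     f \<in> borel_measurable borel \<and> (\<forall>x\<ge>0. f x \<ge> 0) \<and>
     (\<integral>\<^sup>+ x \<in> {0..}. ennreal (f x) \<partial>lborel) = 1"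

definition heavy_tailed :: "(real \<Rightarrow> real) \<Rightarrow> bool" where
  "heavy_tailed f \<longleftrightarrow>
     (\<forall>t>0. (\<integral>\<^sup>+ x \<in> {0..}. ennreal (f x * exp (t * x)) \<partial>lborel) = \<infinity>)"

end

theory Submission
  imports Defs
begin

text \<open>Multiplying a heavy-tailed density by a weight that decays more slowly than every
  exponential keeps it heavy-tailed: if the weight is at least \<open>c exp (-s x)\<close>, the
  exponential moment of order \<open>t\<close> of the product dominates \<open>c\<close> times the moment of
  order \<open>t - s\<close> of the density, which is infinite for \<open>s = t/2\<close>. The weight
  \<open>C (\<delta> x + 1) powr (-1/2)\<close> decays only polynomially, since
  \<open>\<delta> x + 1 \<le> M exp (s x)\<close> for a suitable constant \<open>M\<close>.\<close>

definition subexp_decay :: "(real \<Rightarrow> real) \<Rightarrow> bool" where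
  "subexp_decay w \<longleftrightarrow> (\<forall>s>0. \<exists>c>0. \<forall>x\<ge>0. c * exp (- s * x) \<le> w x)"

lemma subexp_decay_cmult:
  assumes "C > 0" and "subexp_decay w"
  shows "subexp_decay (\<lambda>x. C * w x)"
  unfolding subexp_decay_def
proof (intro allI impI)
  fix s :: real assume "s > 0"
  then obtain c where "c > 0" and c: "\<And>x. x \<ge> 0 \<Longrightarrow> c * exp (- s * x) \<le> w x"
    using assms(2) unfolding subexp_decay_def by blast
  have "C * c * exp (- s * x) \<le> C * w x" if "x \<ge> 0" for x
    using c[OF that] assms(1) by (simp add: mult.assoc)
  with \<open>c > 0\<close> assms(1) show "\<exists>c>0. \<forall>x\<ge>0. c * exp (- s * x) \<le> C * w x"
    by (intro exI[of _ "C * c"]) auto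
qed

lemma subexp_decay_powr:
  fixes \<delta> a :: real
  assumes "\<delta> \<ge> 0" and "a > 0"
  shows "subexp_decay (\<lambda>x. (\<delta> * x + 1) powr (- a))"
  unfolding subexp_decay_def
proof (intro allI impI)
  fix s :: real assume "s > 0"
  define M where "M = max 1 (\<delta> * a / s)"
  have "M \<ge> 1" unfolding M_def by simp
  have "M powr (- a) * exp (- s * x) \<le> (\<delta> * x + 1) powr (- a)" if "x \<ge> 0" for x
  proof -
    have "\<delta> * a / s \<le> M"
      unfolding M_def by simp
    then have "\<delta> \<le> M * (s / a)"
      using \<open>s > 0\<close> \<open>a > 0\<close> by (simp add: field_simps)
    then have "\<delta> * x + 1 \<le> M * (s / a * x) + M"
      using \<open>x \<ge> 0\<close> \<open>M \<ge> 1\<close> by (smt (verit) mult.assoc mult_right_mono)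
    also have "\<dots> \<le> M * exp (s / a * x)"
      using mult_left_mono[OF exp_ge_add_one_self[of "s / a * x"], of M] \<open>M \<ge> 1\<close>
      by (simp add: algebra_simps)
    finally have "(M * exp (s / a * x)) powr (- a) \<le> (\<delta> * x + 1) powr (- a)"
      using \<open>a > 0\<close> \<open>x \<ge> 0\<close> assms(1) by (intro powr_mono2') (auto simp: add_nonneg_pos)
    also have "(M * exp (s / a * x)) powr (- a) = M powr (- a) * exp (- s * x)"
      using \<open>M \<ge> 1\<close> \<open>a > 0\<close> by (simp add: powr_mult exp_powr_real)
    finally show ?thesis .
  qed
  with \<open>M \<ge> 1\<close> show "\<exists>c>0. \<forall>x\<ge>0. c * exp (- s * x) \<le> (\<delta> * x + 1) powr (- a)"
    by (intro exI[of _ "M powr (- a)"]) auto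
qed

lemma heavy_tailed_mult_subexp_decay:
  assumes f: "f \<in> borel_measurable borel" "\<And>x. x \<ge> 0 \<Longrightarrow> f x \<ge> 0"
    and "heavy_tailed f" and "subexp_decay w"
  shows "heavy_tailed (\<lambda>x. w x * f x)"
  unfolding heavy_tailed_def
proof (intro allI impI)
  fix t :: real assume "t > 0"
  then obtain c where "c > 0" and c: "\<And>x. x \<ge> 0 \<Longrightarrow> c * exp (- (t/2) * x) \<le> w x"
    using \<open>subexp_decay w\<close> unfolding subexp_decay_def by (meson half_gt_zero)
  have "c * (f x * exp (t/2 * x)) \<le> w x * f x * exp (t * x)" if "x \<ge> 0" for x
  proof -
    have "exp (t/2 * x) = exp (- (t/2) * x) * exp (t * x)"
      using mult_exp_exp[of "- (t/2) * x" "t * x"] by (simp add: field_simps)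
    then have "c * (f x * exp (t/2 * x)) = c * exp (- (t/2) * x) * f x * exp (t * x)"
      by (simp only: ac_simps)
    also have "\<dots> \<le> w x * f x * exp (t * x)"
      using c[OF that] f(2)[OF that] by (intro mult_right_mono) auto
    finally show ?thesis .
  qed
  then have "(\<integral>\<^sup>+ x \<in> {0..}. ennreal (c * (f x * exp (t/2 * x))) \<partial>lborel)
      \<le> (\<integral>\<^sup>+ x \<in> {0..}. ennreal (w x * f x * exp (t * x)) \<partial>lborel)"
    by (intro nn_integral_mono) (simp add: ennreal_leI split: split_indicator)
  moreover have "(\<integral>\<^sup>+ x \<in> {0..}. ennreal (c * (f x * exp (t/2 * x))) \<partial>lborel)
      = c * (\<integral>\<^sup>+ x \<in> {0..}. ennreal (f x * exp (t/2 * x)) \<partial>lborel)"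
    using f(1) \<open>c > 0\<close>
    by (subst nn_integral_cmult[symmetric]) (auto simp: ennreal_mult' mult.assoc intro!: nn_integral_cong)
  moreover have "(\<integral>\<^sup>+ x \<in> {0..}. ennreal (f x * exp (t/2 * x)) \<partial>lborel) = \<infinity>"
    using \<open>heavy_tailed f\<close> \<open>t > 0\<close> unfolding heavy_tailed_def by (meson half_gt_zero)
  ultimately show "(\<integral>\<^sup>+ x \<in> {0..}. ennreal (w x * f x * exp (t * x)) \<partial>lborel) = \<infinity>"
    using \<open>c > 0\<close> by (simp add: ennreal_mult_eq_top_iff top_unique)
qed

theorem lemma2:
  fixes \<pi> :: "real \<Rightarrow> real" and \<delta> C :: real
  assumes "density_on_nonneg \<pi>"
    and "\<delta> > 0"
    and "C > 0"
    and "density_on_nonneg (\<lambda>x. C * (\<delta> * x + 1) powr (-1/2) * \<pi> x)"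
    and "heavy_tailed \<pi>"
  shows "heavy_tailed (\<lambda>x. C * (\<delta> * x + 1) powr (-1/2) * \<pi> x)"
proof -
  have "\<pi> \<in> borel_measurable borel" and "\<And>x. x \<ge> 0 \<Longrightarrow> \<pi> x \<ge> 0"
    using assms(1) unfolding density_on_nonneg_def by auto
  moreover have "subexp_decay (\<lambda>x. C * (\<delta> * x + 1) powr (- (1/2)))"
    using assms(2,3) by (intro subexp_decay_cmult subexp_decay_powr) auto
  ultimately show ?thesis
    using heavy_tailed_mult_subexp_decay assms(5) by fastforce
qed

end
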